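(* Let $T$ be a finite tree. Then its line graph $L(T)$ is co-chordal if and only if $T$ is one of the following: (i) a star graph; (ii) a broom of diameter $3$; (iii) a (partially) whiskered star; (iv) a path $P_n$ with $2\leq n\leq 5$.
   Context: The line graph $L(G)$ has vertex set $E(G)$, two vertices adjacent iff the corresponding edges share a vertex. A graph is chordal if it has no induced cycle of length $>3$; it is co-chordal if its complement is chordal. A star has vertices $u,v_1,\dots,v_n$ and edges $\{u,v_i\}$. $P_n$ has vertices $u_1,\dots,u_n$ and edges $\{u_i,u_{i+1}\}$. A broom is obtained from $P_n$ by attaching $m$ new vertices via pendant edges to its first (or last) vertex. A (partially) whiskered star is obtained from a star by attaching a new pendant edge (with a new vertex) to each vertex of the star (respectively to each vertex of some subset of its vertices). *)

theory Defs
  imports Main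
begin

type_synonym 'a sgraph = "'a set \<times> 'a set set"

definition verts :: "'a sgraph \<Rightarrow> 'a set" where
  "verts G = fst G"

definition edges :: "'a sgraph \<Rightarrow> 'a set set" where
  "edges G = snd G"

definition simple_graph :: "'a sgraph \<Rightarrow> bool" where
  "simple_graph G \<longleftrightarrow>
     (\<forall>e\<in>edges G. \<exists>u v. u \<noteq> v \<and> u \<in> verts G \<and> v \<in> verts G \<and> e = {u, v})"

definition walk :: "'a sgraph \<Rightarrow> 'a list \<Rightarrow> bool" where
  "walk G xs \<longleftrightarrow> xs \<noteq> [] \<and> set xs \<subseteq> verts G \<and>
     (\<forall>i. Suc i < length xs \<longrightarrow> {xs ! i, xs ! Suc i} \<in> edges G)"

definition connected_graph :: "'a sgraph \<Rightarrow> bool" where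
  "connected_graph G \<longleftrightarrow>
     (\<forall>u\<in>verts G. \<forall>v\<in>verts G. \<exists>xs. walk G xs \<and> hd xs = u \<and> last xs = v)"

definition is_cycle :: "'a sgraph \<Rightarrow> 'a list \<Rightarrow> bool" where
  "is_cycle G xs \<longleftrightarrow> 3 \<le> length xs \<and> distinct xs \<and> walk G xs \<and> {last xs, hd xs} \<in> edges G"

definition tree :: "'a sgraph \<Rightarrow> bool" where
  "tree G \<longleftrightarrow> simple_graph G \<and> finite (verts G) \<and> verts G \<noteq> {} \<and>
     connected_graph G \<and> \<not> (\<exists>xs. is_cycle G xs)"

definition dist :: "'a sgraph \<Rightarrow> 'a \<Rightarrow> 'a \<Rightarrow> nat" where
  "dist G u v = (LEAST k. \<exists>xs. walk G xs \<and> hd xs = u \<and> last xs = v \<and> length xs = Suc k)"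

definition diameter :: "'a sgraph \<Rightarrow> nat" where
  "diameter G = Max {dist G u v | u v. u \<in> verts G \<and> v \<in> verts G}"

definition line_graph :: "'a sgraph \<Rightarrow> 'a set sgraph" where
  "line_graph G = (edges G,
     {{e, f} | e f. e \<in> edges G \<and> f \<in> edges G \<and> e \<noteq> f \<and> e \<inter> f \<noteq> {}})"

definition complement :: "'a sgraph \<Rightarrow> 'a sgraph" where
  "complement G = (verts G,
     {{u, v} | u v. u \<in> verts G \<and> v \<in> verts G \<and> u \<noteq> v \<and> {u, v} \<notin> edges G})"

definition induced_cycle :: "'a sgraph \<Rightarrow> 'a list \<Rightarrow> bool" where
  "induced_cycle G xs \<longleftrightarrow> distinct xs \<and> set xs \<subseteq> verts G \<and>
     (\<forall>i j. i < length xs \<longrightarrow> j < length xs \<longrightarrow> i \<noteq> j \<longrightarrow>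
        ({xs ! i, xs ! j} \<in> edges G \<longleftrightarrow>
           (Suc i mod length xs = j \<or> Suc j mod length xs = i)))"

definition chordal :: "'a sgraph \<Rightarrow> bool" where
  "chordal G \<longleftrightarrow> \<not> (\<exists>xs. length xs > 3 \<and> induced_cycle G xs)"

definition co_chordal :: "'a sgraph \<Rightarrow> bool" where
  "co_chordal G \<longleftrightarrow> chordal (complement G)"

definition isomorphic :: "'a sgraph \<Rightarrow> 'b sgraph \<Rightarrow> bool" where
  "isomorphic G H \<longleftrightarrow> (\<exists>f. bij_betw f (verts G) (verts H) \<and>
     (\<forall>u\<in>verts G. \<forall>v\<in>verts G. {u, v} \<in> edges G \<longleftrightarrow> {f u, f v} \<in> edges H))"

definition star_graph :: "nat \<Rightarrow> nat sgraph" where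
  "star_graph n = ({0..n}, {{0, i} | i. 1 \<le> i \<and> i \<le> n})"

definition path_graph :: "nat \<Rightarrow> nat sgraph" where
  "path_graph n = ({1..n}, {{i, Suc i} | i. 1 \<le> i \<and> Suc i \<le> n})"

definition broom :: "nat \<Rightarrow> nat \<Rightarrow> nat sgraph" where
  "broom n m = ({1..n + m},
     {{i, Suc i} | i. 1 \<le> i \<and> Suc i \<le> n} \<union> {{1, j} | j. n < j \<and> j \<le> n + m})"

definition whiskered_star :: "nat \<Rightarrow> nat set \<Rightarrow> nat sgraph" where
  "whiskered_star n S = ({0..n} \<union> (\<lambda>i. n + 1 + i) ` S,
     {{0, i} | i. 1 \<le> i \<and> i \<le> n} \<union> {{i, n + 1 + i} | i. i \<in> S})"

end

(* Call c a hub of G (matching_off G c) if the edges of G avoiding c are pairwise disjoint,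
   i.e. G - c is a matching.

   If G has a hub c, the complement of L(G) is chordal.  In an induced cycle of length at least 4
   of the complement, consecutive edges of G are disjoint while edges two apart meet.  If some edge
   of the cycle contains c, its two cycle neighbours avoid c; otherwise any two edges two apart
   avoid c.  Either way two distinct edges avoiding c meet, contradicting the hub property.

   Conversely, two vertex-disjoint paths a-b-c and d-e-f in G give the induced 4-cycle
   ab, de, bc, ef in the complement of L(G).  In a tree without two such paths, a vertex y of
   maximum degree is a hub unless some path u-w-v avoids y.  Then y has at most one neighbour on
   u-w-v (no cycles) and at most one off it (no two disjoint paths), so all degrees are at most 2
   and y, w lie on a path t-y-s-w-v' whose middle vertex s is a hub.  Finally, a tree with hub c
   is a partially whiskered star centred at c, and each of the four families has a hub; for
   brooms the diameter bound forces a handle of at most four vertices. *)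

theory Submission
  imports Defs
begin

definition nbrs :: "'a sgraph \<Rightarrow> 'a \<Rightarrow> 'a set" where
  "nbrs G v = {w. {v, w} \<in> edges G}"

definition matching_off :: "'a sgraph \<Rightarrow> 'a \<Rightarrow> bool" where
  "matching_off G c \<longleftrightarrow>
     (\<forall>e\<in>edges G. \<forall>f\<in>edges G. e \<noteq> f \<longrightarrow> c \<notin> e \<longrightarrow> c \<notin> f \<longrightarrow> e \<inter> f = {})"

definition has_two_disjoint_P3 :: "'a sgraph \<Rightarrow> bool" where
  "has_two_disjoint_P3 G \<longleftrightarrow> (\<exists>a b c d e f. distinct [a, b, c, d, e, f] \<and>
     {a, b} \<in> edges G \<and> {b, c} \<in> edges G \<and> {d, e} \<in> edges G \<and> {e, f} \<in> edges G)"

lemma has_two_disjoint_P3I: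
  assumes "distinct [a, b, c, d, e, f]"
    "{a, b} \<in> edges G" "{b, c} \<in> edges G" "{d, e} \<in> edges G" "{e, f} \<in> edges G"
  shows "has_two_disjoint_P3 G"
  using assms unfolding has_two_disjoint_P3_def by blast

lemma matching_off_edges_eq:
  assumes "matching_off G c" "e \<in> edges G" "f \<in> edges G" "c \<notin> e" "c \<notin> f" "p \<in> e" "p \<in> f"
  shows "e = f"
  using assms unfolding matching_off_def by blast

section \<open>Walks and trees\<close>

lemma simple_graph_edgeD:
  assumes "simple_graph G" "{u, v} \<in> edges G"
  shows "u \<noteq> v" "u \<in> verts G" "v \<in> verts G"
  using assms unfolding simple_graph_def by (metis doubleton_eq_iff)+

lemma edge_commute: "{u, v} \<in> edges G \<Longrightarrow> {v, u} \<in> edges G"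
  by (simp add: insert_commute)

lemma edge_containing:
  assumes "simple_graph G" "e \<in> edges G" "w \<in> e"
  obtains u where "e = {w, u}"
proof -
  obtain a b where "e = {a, b}" using assms(1,2) unfolding simple_graph_def by blast
  then have "e = {w, if w = a then b else a}" using assms(3) by auto
  then show thesis using that by blast
qed

lemma walk_singleton [simp]: "walk G [x] \<longleftrightarrow> x \<in> verts G"
  unfolding walk_def by simp

lemma walk_Cons_Cons [simp]:
  "walk G (x # y # ys) \<longleftrightarrow> {x, y} \<in> edges G \<and> x \<in> verts G \<and> walk G (y # ys)"
  unfolding walk_def by (auto simp: All_less_Suc2)

lemma walk_last_mem:
  assumes "walk G xs" "hd xs \<in> X" "\<And>x z. x \<in> X \<Longrightarrow> {x, z} \<in> edges G \<Longrightarrow> z \<in> X"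
  shows "last xs \<in> X"
  using assms(1,2)
proof (induction xs rule: induct_list012)
  case (3 x y ys)
  then show ?case using assms(3) by simp
qed (simp_all add: walk_def)

lemma connected_graph_verts_subset:
  assumes "connected_graph G" "c \<in> verts G" "c \<in> X"
    and "\<And>x z. x \<in> X \<Longrightarrow> {x, z} \<in> edges G \<Longrightarrow> z \<in> X"
  shows "verts G \<subseteq> X"
proof
  fix v
  assume "v \<in> verts G"
  then obtain xs where "walk G xs" "hd xs = c" "last xs = v"
    using assms(1,2) unfolding connected_graph_def by blast
  then show "v \<in> X" using walk_last_mem[of G xs X] assms(3,4) by blast
qed

lemma tree_simple: "tree G \<Longrightarrow> simple_graph G"
  unfolding tree_def by blast

lemma finite_nbrs:
  assumes "tree G"
  shows "finite (nbrs G v)"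
proof -
  have "nbrs G v \<subseteq> verts G"
    using simple_graph_edgeD[OF tree_simple[OF assms]] unfolding nbrs_def by blast
  then show ?thesis using assms finite_subset unfolding tree_def by blast
qed

lemma tree_no_cycle:
  assumes "tree G" "distinct (x # y # z # zs)" "walk G (x # y # z # zs)"
    "{last (z # zs), x} \<in> edges G"
  shows False
proof -
  have "is_cycle G (x # y # z # zs)"
    using assms(2-4) unfolding is_cycle_def by (simp del: walk_Cons_Cons)
  then show False using assms(1) unfolding tree_def by blast
qed

lemma tree_no_triangle:
  assumes "tree G" "distinct [a, b, c]" "{a, b} \<in> edges G" "{b, c} \<in> edges G" "{c, a} \<in> edges G"
  shows False
  using tree_no_cycle[OF assms(1,2)] assms(3-) simple_graph_edgeD[OF tree_simple[OF assms(1)]] by simp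

lemma tree_no_4_cycle:
  assumes "tree G" "distinct [a, b, c, d]"
    "{a, b} \<in> edges G" "{b, c} \<in> edges G" "{c, d} \<in> edges G" "{d, a} \<in> edges G"
  shows False
  using tree_no_cycle[OF assms(1,2)] assms(3-) simple_graph_edgeD[OF tree_simple[OF assms(1)]] by simp

lemma tree_no_5_cycle:
  assumes "tree G" "distinct [a, b, c, d, e]" "{a, b} \<in> edges G" "{b, c} \<in> edges G"
    "{c, d} \<in> edges G" "{d, e} \<in> edges G" "{e, a} \<in> edges G"
  shows False
  using tree_no_cycle[OF assms(1,2)] assms(3-) simple_graph_edgeD[OF tree_simple[OF assms(1)]] by simp

lemma walk_lipschitz:
  assumes lipschitz: "\<And>x y. {x, y} \<in> edges G \<Longrightarrow> \<bar>p x - p y\<bar> \<le> (1::int)" and "walk G xs"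
  shows "\<bar>p (hd xs) - p (last xs)\<bar> \<le> int (length xs) - 1"
  using assms(2)
proof (induction xs rule: induct_list012)
  case (3 x y ys)
  then have "\<bar>p y - p (last (y # ys))\<bar> \<le> int (length (y # ys)) - 1" "\<bar>p x - p y\<bar> \<le> 1"
    using lipschitz by simp_all
  then show ?case by simp
qed (simp_all add: walk_def)

lemma dist_ge_lipschitz:
  assumes "\<And>x y. {x, y} \<in> edges G \<Longrightarrow> \<bar>p x - p y\<bar> \<le> (1::int)"
    and "walk G xs" "hd xs = u" "last xs = v"
  shows "\<bar>p u - p v\<bar> \<le> int (dist G u v)"
proof -
  have "xs \<noteq> []" using assms(2) unfolding walk_def by blast
  then have "\<exists>k xs. walk G xs \<and> hd xs = u \<and> last xs = v \<and> length xs = Suc k"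
    using assms(2-4) by (intro exI[of _ "length xs - 1"] exI[of _ xs]) simp
  then have "\<exists>ys. walk G ys \<and> hd ys = u \<and> last ys = v \<and> length ys = Suc (dist G u v)"
    unfolding dist_def by (rule LeastI_ex)
  then obtain ys where ys: "walk G ys" "hd ys = u" "last ys = v" "length ys = Suc (dist G u v)"
    by blast
  then show ?thesis using walk_lipschitz[OF assms(1) ys(1)] by simp
qed

lemma dist_le_diameter:
  assumes "finite (verts G)" "u \<in> verts G" "v \<in> verts G"
  shows "dist G u v \<le> diameter G"
proof -
  have "{dist G u v | u v. u \<in> verts G \<and> v \<in> verts G}
      = (\<lambda>(u, v). dist G u v) ` (verts G \<times> verts G)"
    by auto
  then have "finite {dist G u v | u v. u \<in> verts G \<and> v \<in> verts G}" using assms(1) by simp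
  then show ?thesis unfolding diameter_def using assms(2,3) by (intro Max_ge) blast+
qed

section \<open>The complement of the line graph\<close>

lemma verts_complement_line_graph: "verts (complement (line_graph G)) = edges G"
  unfolding complement_def line_graph_def edges_def verts_def by simp

lemma edge_complement_line_graph_iff:
  assumes "e \<in> edges G" "f \<in> edges G"
  shows "{e, f} \<in> edges (complement (line_graph G)) \<longleftrightarrow> e \<noteq> f \<and> e \<inter> f = {}"
  using assms unfolding complement_def line_graph_def edges_def verts_def
  by (auto simp: doubleton_eq_iff)

lemma induced_cycle_consecutive:
  assumes "induced_cycle H xs" "3 < length xs" "i < length xs"
  shows "{xs ! i, xs ! ((i + 1) mod length xs)} \<in> edges H"
    and "{xs ! i, xs ! ((i + 2) mod length xs)} \<notin> edges H"
    and "xs ! i \<noteq> xs ! ((i + 2) mod length xs)"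
proof -
  let ?k = "length xs"
  have "(i + 1) mod ?k = (if i + 1 < ?k then i + 1 else 0)"
    "(i + 2) mod ?k = (if i + 2 < ?k then i + 2 else i + 2 - ?k)"
    "Suc (i + 2) mod ?k = (if Suc (i + 2) < ?k then Suc (i + 2) else Suc (i + 2) - ?k)"
    using assms(2,3) by (simp_all add: mod_if)
  moreover have "Suc ((i + 2) mod ?k) mod ?k = Suc (i + 2) mod ?k" by (rule mod_Suc_eq)
  ultimately have "(i + 1) mod ?k \<noteq> i" "(i + 2) mod ?k \<noteq> i" "(i + 1) mod ?k \<noteq> (i + 2) mod ?k"
    "Suc ((i + 2) mod ?k) mod ?k \<noteq> i"
    using assms(2,3) by auto
  moreover have adjacent_iff: "{xs ! i, xs ! j} \<in> edges H \<longleftrightarrow> Suc i mod ?k = j \<or> Suc j mod ?k = i"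
    if "j < ?k" "i \<noteq> j" for j
    using assms(1,3) that unfolding induced_cycle_def by blast
  moreover have "0 < ?k" using assms(2) by linarith
  then have "(i + 1) mod ?k < ?k" "(i + 2) mod ?k < ?k" by (metis mod_less_divisor)+
  moreover have "distinct xs" using assms(1) unfolding induced_cycle_def by blast
  ultimately show "{xs ! i, xs ! ((i + 1) mod ?k)} \<in> edges H"
    and "{xs ! i, xs ! ((i + 2) mod ?k)} \<notin> edges H"
    and "xs ! i \<noteq> xs ! ((i + 2) mod ?k)"
    using assms(3) by (simp_all add: nth_eq_iff_index_eq)
qed

lemma mod_predecessor_shift:
  assumes "(j::nat) < k"
  shows "((j + k - 1) mod k + 1) mod k = j" and "((j + k - 1) mod k + 2) mod k = (j + 1) mod k"
proof -
  have "((j + k - 1) mod k + 1) mod k = (j + k) mod k"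
    and "((j + k - 1) mod k + 2) mod k = (j + 1 + k) mod k"
    using assms by (simp_all only: mod_add_left_eq) simp_all
  then show "((j + k - 1) mod k + 1) mod k = j" and "((j + k - 1) mod k + 2) mod k = (j + 1) mod k"
    using assms by (simp, metis mod_add_self2)
qed

lemma co_chordal_line_graph_if_matching_off:
  assumes matching: "matching_off G c"
  shows "co_chordal (line_graph G)"
  unfolding co_chordal_def chordal_def
proof
  assume "\<exists>xs. 3 < length xs \<and> induced_cycle (complement (line_graph G)) xs"
  then obtain xs where long: "3 < length xs" and cyc: "induced_cycle (complement (line_graph G)) xs"
    by blast
  define k where "k = length xs"
  have k_pos: "0 < k" using long k_def by linarith
  have in_edges: "xs ! (i mod k) \<in> edges G" for i
    using cyc k_pos unfolding induced_cycle_def verts_complement_line_graph k_def by auto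
  have consecutive_disjoint: "xs ! i \<inter> xs ! ((i + 1) mod k) = {}" if "i < k" for i
    using induced_cycle_consecutive(1)[OF cyc long] edge_complement_line_graph_iff in_edges that
    unfolding k_def by (metis mod_less)
  have two_apart_meet: "xs ! i \<inter> xs ! ((i + 2) mod k) \<noteq> {}" if "i < k" for i
    using induced_cycle_consecutive(2,3)[OF cyc long] edge_complement_line_graph_iff in_edges that
    unfolding k_def by (metis mod_less)
  obtain i where i: "i < k" "c \<notin> xs ! i" "c \<notin> xs ! ((i + 2) mod k)"
  proof (cases "\<exists>j<k. c \<in> xs ! j")
    case True
    then obtain j where j: "j < k" "c \<in> xs ! j" by blast
    \<comment> \<open>the two neighbours of position j on the cycle are disjoint from xs ! j, so they avoid c\<close>
    define i where "i = (j + k - 1) mod k"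
    have "i < k" "(i + 1) mod k = j" "(i + 2) mod k = (j + 1) mod k"
      using mod_predecessor_shift[OF j(1)] k_pos unfolding i_def by simp_all
    then show ?thesis
      using that[of i] consecutive_disjoint[of i] consecutive_disjoint[of j] j by auto
  next
    case False
    then show ?thesis using that[of 0] k_pos by simp
  qed
  then have "xs ! i \<inter> xs ! ((i + 2) mod k) = {}"
    using matching induced_cycle_consecutive(3)[OF cyc long] in_edges[of i] in_edges[of "i + 2"]
    unfolding matching_off_def k_def by simp
  then show False using two_apart_meet[OF i(1)] by blast
qed

lemma induced_cycle_4:
  assumes "distinct [p, q, r, s]" "{p, q, r, s} \<subseteq> verts H"
    "{p, q} \<in> edges H" "{q, r} \<in> edges H" "{r, s} \<in> edges H" "{s, p} \<in> edges H"
    "{p, r} \<notin> edges H" "{q, s} \<notin> edges H"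
  shows "induced_cycle H [p, q, r, s]"
proof -
  have "{[p, q, r, s] ! i, [p, q, r, s] ! j} \<in> edges H \<longleftrightarrow> Suc i mod 4 = j \<or> Suc j mod 4 = i"
    if "i < 4" "j < 4" "i \<noteq> j" for i j
  proof -
    from that have "i \<in> {0, 1, 2, 3}" "j \<in> {0, 1, 2, 3}" by auto
    then show ?thesis using that(3) assms(3-) by (auto simp: insert_commute)
  qed
  then show ?thesis unfolding induced_cycle_def using assms(1,2) by auto
qed

lemma no_two_disjoint_P3_if_co_chordal_line_graph:
  assumes "co_chordal (line_graph G)"
  shows "\<not> has_two_disjoint_P3 G"
proof
  assume "has_two_disjoint_P3 G"
  then obtain a b c d e f where abcdef: "distinct [a, b, c, d, e, f]"
    and edges: "{a, b} \<in> edges G" "{b, c} \<in> edges G" "{d, e} \<in> edges G" "{e, f} \<in> edges G"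
    unfolding has_two_disjoint_P3_def by blast
  have "induced_cycle (complement (line_graph G)) [{a, b}, {d, e}, {b, c}, {e, f}]"
    using abcdef edges by (intro induced_cycle_4)
      (auto simp: verts_complement_line_graph edge_complement_line_graph_iff doubleton_eq_iff)
  then show False using assms unfolding co_chordal_def chordal_def by force
qed

section \<open>Trees without two disjoint paths of length two\<close>

lemma P3_avoiding_if_not_matching_off:
  assumes "simple_graph G" "\<not> matching_off G y"
  obtains u w v where "u \<noteq> v" "{w, u} \<in> edges G" "{w, v} \<in> edges G" "y \<notin> {u, w, v}"
proof -
  obtain e f where ef: "e \<in> edges G" "f \<in> edges G" "e \<noteq> f" "y \<notin> e" "y \<notin> f" "e \<inter> f \<noteq> {}"
    using assms(2) unfolding matching_off_def by blast
  then obtain w where w: "w \<in> e" "w \<in> f" by blast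
  obtain u where u: "e = {w, u}" using edge_containing[OF assms(1) ef(1) w(1)] .
  obtain v where v: "f = {w, v}" using edge_containing[OF assms(1) ef(2) w(2)] .
  from ef u v show thesis by (intro that) auto
qed

lemma card_nbrs_inside_P3_le_1:
  assumes T: "tree G" and P3: "u \<noteq> v" "{w, u} \<in> edges G" "{w, v} \<in> edges G" "y \<notin> {u, w, v}"
  shows "card (nbrs G y \<inter> {u, w, v}) \<le> 1"
proof -
  have "w \<noteq> u" "w \<noteq> v" using P3 simple_graph_edgeD[OF tree_simple[OF T]] by blast+
  have "p = q" if p: "p \<in> nbrs G y \<inter> {u, w, v}" and q: "q \<in> nbrs G y \<inter> {u, w, v}" for p q
  proof (rule ccontr)
    assume "p \<noteq> q"
    have yp: "{y, p} \<in> edges G" and yq: "{y, q} \<in> edges G" using p q unfolding nbrs_def by blast+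
    have "p \<in> {u, w, v}" "q \<in> {u, w, v}" using p q by blast+
    then consider "{y, u} \<in> edges G" "{y, w} \<in> edges G" | "{y, v} \<in> edges G" "{y, w} \<in> edges G"
      | "{y, u} \<in> edges G" "{y, v} \<in> edges G"
      using yp yq \<open>p \<noteq> q\<close> by auto
    then show False
    proof cases
      case 1
      then show False
        using tree_no_triangle[OF T _ 1(1) edge_commute[OF P3(2)] edge_commute[OF 1(2)]]
          P3(4) \<open>w \<noteq> u\<close> by simp
    next
      case 2
      then show False
        using tree_no_triangle[OF T _ 2(1) edge_commute[OF P3(3)] edge_commute[OF 2(2)]]
          P3(4) \<open>w \<noteq> v\<close> by simp
    next
      case 3
      then show False
        using tree_no_4_cycle[OF T _ 3(1) edge_commute[OF P3(2)] P3(3) edge_commute[OF 3(2)]]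
          P3(1,4) \<open>w \<noteq> u\<close> \<open>w \<noteq> v\<close> by simp
    qed
  qed
  then have "\<forall>p\<in>nbrs G y \<inter> {u, w, v}. \<forall>q\<in>nbrs G y \<inter> {u, w, v}. p = q" by blast
  then show ?thesis
    using card_le_Suc0_iff_eq finite_nbrs[OF T] by (metis One_nat_def finite_Diff finite_Int)
qed

lemma card_nbrs_outside_P3_le_1:
  assumes T: "tree G" and no_2P3: "\<not> has_two_disjoint_P3 G"
    and P3: "u \<noteq> v" "{w, u} \<in> edges G" "{w, v} \<in> edges G" "y \<notin> {u, w, v}"
  shows "card (nbrs G y - {u, w, v}) \<le> 1"
proof -
  have "p = q" if "p \<in> nbrs G y - {u, w, v}" "q \<in> nbrs G y - {u, w, v}" for p q
  proof (rule ccontr)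
    assume "p \<noteq> q"
    moreover have py: "{p, y} \<in> edges G" and yq: "{y, q} \<in> edges G"
      using that unfolding nbrs_def by (simp_all add: insert_commute)
    ultimately have "distinct [p, y, q, u, w, v]"
      using that P3 simple_graph_edgeD[OF tree_simple[OF T]] by auto
    then show False
      using no_2P3 has_two_disjoint_P3I[OF _ py yq edge_commute[OF P3(2)] P3(3)] by blast
  qed
  then have "\<forall>p\<in>nbrs G y - {u, w, v}. \<forall>q\<in>nbrs G y - {u, w, v}. p = q" by blast
  then show ?thesis
    using card_le_Suc0_iff_eq finite_nbrs[OF T] by (metis One_nat_def finite_Diff finite_Int)
qed

lemma eq_doubleton_if_card_le_2:
  assumes "finite A" "p \<in> A" "q \<in> A" "p \<noteq> q" "card A \<le> 2"
  shows "A = {p, q}"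
proof (rule card_seteq[OF assms(1), symmetric])
  show "{p, q} \<subseteq> A" "card A \<le> card {p, q}" using assms(2-5) by simp_all
qed

locale P5_inner_degree_2 =
  fixes G :: "'a sgraph" and t y u w v :: 'a
  assumes tree: "tree G" and no_2P3: "\<not> has_two_disjoint_P3 G"
    and distinct: "distinct [t, y, u, w, v]"
    and edges: "{t, y} \<in> edges G" "{y, u} \<in> edges G" "{u, w} \<in> edges G" "{w, v} \<in> edges G"
    and nbrs_y: "nbrs G y = {t, u}" and nbrs_w: "nbrs G w = {u, v}"
begin

lemma reverse: "P5_inner_degree_2 G v w u y t"
proof
  show "distinct [v, w, u, y, t]" using distinct by auto
  show "nbrs G w = {v, u}" "nbrs G y = {u, t}" using nbrs_w nbrs_y by auto
qed (use tree no_2P3 edges in \<open>simp_all add: insert_commute\<close>)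

lemma no_P3_from_y:
  assumes yg: "{y, g} \<in> edges G" and gx: "{g, x} \<in> edges G" and "x \<noteq> y" "u \<notin> {g, x}"
  shows False
proof -
  \<comment> \<open>a P3 starting at y must continue through t, and cannot avoid the P3 u-w-v\<close>
  have "g \<in> nbrs G y" using yg unfolding nbrs_def by simp
  then have "g = t" using nbrs_y \<open>u \<notin> {g, x}\<close> by auto
  then have tx: "{t, x} \<in> edges G" using gx by simp
  have "x \<noteq> t" using simple_graph_edgeD(1)[OF tree_simple[OF tree] tx] by simp
  have "x \<in> {u, w, v}"
  proof (rule ccontr)
    assume "x \<notin> {u, w, v}"
    then have "distinct [y, t, x, u, w, v]" using distinct \<open>x \<noteq> y\<close> \<open>x \<noteq> t\<close> by auto
    then show False
      using no_2P3 has_two_disjoint_P3I[OF _ edge_commute[OF edges(1)] tx edges(3,4)] by blast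
  qed
  then consider "x = w" | "x = v" using \<open>u \<notin> {g, x}\<close> by blast
  then show False
  proof cases
    case 1
    then have "t \<in> nbrs G w" using edge_commute[OF tx] unfolding nbrs_def by simp
    then show False using nbrs_w distinct by simp
  next
    case 2
    then show False using tree_no_5_cycle[OF tree distinct edges] edge_commute[OF tx] by simp
  qed
qed

lemma P3_avoiding_u_misses_y:
  assumes P3: "a \<noteq> b" "{g, a} \<in> edges G" "{g, b} \<in> edges G" "u \<notin> {a, g, b}"
  shows "y \<notin> {a, g, b}"
proof
  assume "y \<in> {a, g, b}"
  then consider "g = y" | "a = y" | "b = y" by blast
  then show False
  proof cases
    case 1
    then have "a \<in> nbrs G y" "b \<in> nbrs G y" using P3(2,3) unfolding nbrs_def by simp_all
    then show False using P3(1,4) nbrs_y by auto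
  next
    case 2
    then show False using no_P3_from_y[of g b] edge_commute[OF P3(2)] P3 by blast
  next
    case 3
    then show False using no_P3_from_y[of g a] edge_commute[OF P3(3)] P3 by blast
  qed
qed

lemma matching_off_centre: "matching_off G u"
proof (rule ccontr)
  assume "\<not> matching_off G u"
  with tree_simple[OF tree] obtain a g b
    where P3: "a \<noteq> b" "{g, a} \<in> edges G" "{g, b} \<in> edges G" "u \<notin> {a, g, b}"
    by (rule P3_avoiding_if_not_matching_off)
  have "y \<notin> {a, g, b}" "w \<notin> {a, g, b}"
    using P3_avoiding_u_misses_y[OF P3] P5_inner_degree_2.P3_avoiding_u_misses_y[OF reverse P3] .
  moreover have "a \<noteq> g" "b \<noteq> g"
    using simple_graph_edgeD(1)[OF tree_simple[OF tree]] P3(2,3) by blast+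
  ultimately have "distinct [a, g, b, y, u, w]" using P3(1,4) distinct by auto
  then show False
    using no_2P3 has_two_disjoint_P3I[OF _ edge_commute[OF P3(2)] P3(3) edges(2,3)] by blast
qed

end

lemma matching_off_nbr_if_degrees_le_2:
  assumes T: "tree G" and no_2P3: "\<not> has_two_disjoint_P3 G"
    and deg_le_2: "\<And>z. z \<in> verts G \<Longrightarrow> card (nbrs G z) \<le> 2"
    and P3: "u \<noteq> v" "{w, u} \<in> edges G" "{w, v} \<in> edges G" "y \<notin> {u, w, v}"
    and nbrs_y: "nbrs G y = {t, s}" "s \<in> {u, w, v}" "t \<notin> {u, w, v}"
  shows "matching_off G s"
proof -
  have simple: "simple_graph G" using T by (rule tree_simple)
  have "w \<in> verts G" using simple_graph_edgeD(2)[OF simple P3(2)] .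
  have "s \<noteq> w"
  proof
    assume "s = w"
    then have "{u, v, y} \<subseteq> nbrs G w"
      using P3(2,3) nbrs_y(1) unfolding nbrs_def by (auto simp: insert_commute)
    then have "card {u, v, y} \<le> 2"
      using card_mono[OF finite_nbrs[OF T]] deg_le_2[OF \<open>w \<in> verts G\<close>] by (meson le_trans)
    then show False using P3(1,4) by auto
  qed
  define v' where "v' = (if s = u then v else u)"
  have "s \<in> {u, v}" using nbrs_y(2) \<open>s \<noteq> w\<close> by blast
  then have ws: "{w, s} \<in> edges G" and wv': "{w, v'} \<in> edges G" and "v' \<in> {u, v}" "v' \<noteq> s"
    using P3(1-3) unfolding v'_def by auto
  have ty: "{t, y} \<in> edges G" and ys: "{y, s} \<in> edges G"
    using nbrs_y(1) unfolding nbrs_def by (auto simp: insert_commute)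
  have "t \<noteq> y" "w \<noteq> v'" using simple_graph_edgeD(1)[OF simple] ty wv' by blast+
  then have "distinct [t, y, s, w, v']"
    using nbrs_y(2,3) P3(4) \<open>s \<noteq> w\<close> \<open>v' \<in> {u, v}\<close> \<open>v' \<noteq> s\<close> by auto
  moreover have "nbrs G w = {s, v'}"
    using ws wv' \<open>v' \<noteq> s\<close> deg_le_2[OF \<open>w \<in> verts G\<close>]
    by (intro eq_doubleton_if_card_le_2 finite_nbrs[OF T]) (simp_all add: nbrs_def)
  ultimately interpret P5_inner_degree_2 G t y s w v'
    using T no_2P3 ty ys edge_commute[OF ws] wv' nbrs_y(1) by unfold_locales
  show ?thesis by (rule matching_off_centre)
qed

lemma ex_matching_off_if_no_two_disjoint_P3:
  assumes T: "tree G" and no_2P3: "\<not> has_two_disjoint_P3 G"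
  shows "\<exists>c\<in>verts G. matching_off G c"
proof -
  have simple: "simple_graph G" using T by (rule tree_simple)
  have fin: "finite (verts G)" and nonempty: "verts G \<noteq> {}" using T unfolding tree_def by blast+
  have nbrs_verts: "nbrs G z \<subseteq> verts G" for z
    using simple_graph_edgeD(3)[OF simple] unfolding nbrs_def by blast
  obtain y where y: "y \<in> verts G"
    and max_deg: "\<And>z. z \<in> verts G \<Longrightarrow> card (nbrs G z) \<le> card (nbrs G y)"
  proof -
    obtain k where "k \<in> verts G" using nonempty by blast
    moreover have "card (nbrs G z) < Suc (card (verts G))" for z
      using card_mono[OF fin nbrs_verts] by (simp add: le_imp_less_Suc)
    ultimately show thesis
      using ex_has_greatest_nat[of "\<lambda>z. z \<in> verts G" k "\<lambda>z. card (nbrs G z)"] that by blast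
  qed
  show ?thesis
  proof (cases "matching_off G y")
    case False
    with simple obtain u w v
      where P3: "u \<noteq> v" "{w, u} \<in> edges G" "{w, v} \<in> edges G" "y \<notin> {u, w, v}"
      by (rule P3_avoiding_if_not_matching_off)
    let ?P = "{u, w, v}"
    \<comment> \<open>y has at most one neighbour on the P3 and at most one off it, while w has two neighbours\<close>
    have "card {u, v} \<le> card (nbrs G w)"
      using P3(2,3) by (intro card_mono[OF finite_nbrs[OF T]]) (simp add: nbrs_def)
    then have "2 \<le> card (nbrs G w)" using P3(1) by simp
    moreover have "card (nbrs G y) \<le> card (nbrs G y \<inter> ?P) + card (nbrs G y - ?P)"
      using card_Un_le[of "nbrs G y \<inter> ?P" "nbrs G y - ?P"] by (simp add: Int_Diff_Un)
    moreover have "card (nbrs G y \<inter> ?P) \<le> 1" "card (nbrs G y - ?P) \<le> 1"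
      using card_nbrs_inside_P3_le_1[OF T P3] card_nbrs_outside_P3_le_1[OF T no_2P3 P3] .
    moreover have "card (nbrs G w) \<le> card (nbrs G y)"
      using max_deg simple_graph_edgeD(2)[OF simple P3(2)] by blast
    ultimately have "card (nbrs G y) = 2" "card (nbrs G y \<inter> ?P) = 1" "card (nbrs G y - ?P) = 1"
      by linarith+
    then have deg_le_2: "card (nbrs G z) \<le> 2" if "z \<in> verts G" for z
      using max_deg[OF that] by simp
    from \<open>card (nbrs G y \<inter> ?P) = 1\<close> \<open>card (nbrs G y - ?P) = 1\<close>
    obtain s t where "nbrs G y \<inter> ?P = {s}" "nbrs G y - ?P = {t}"
      by (meson card_1_singletonE)
    then have "nbrs G y = {t, s}" "s \<in> ?P" "t \<notin> ?P" by auto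
    then have "matching_off G s"
      using matching_off_nbr_if_degrees_le_2[OF T no_2P3 deg_le_2 P3] by blast
    moreover have "s \<in> verts G" using \<open>nbrs G y = {t, s}\<close> nbrs_verts by blast
    ultimately show ?thesis by blast
  qed (use y in blast)
qed

section \<open>Trees with a hub are whiskered stars\<close>

lemma isomorphic_if_bij_betw_edges_image:
  assumes simple: "simple_graph H" and bij: "bij_betw h (verts H) (verts G)"
    and edges_G: "edges G = (`) h ` edges H"
  shows "isomorphic G H"
  unfolding isomorphic_def
proof (intro exI conjI ballI)
  let ?f = "inv_into (verts H) h"
  show "bij_betw ?f (verts G) (verts H)" using bij by (rule bij_betw_inv_into)
  have inj: "inj_on h (verts H)" using bij by (rule bij_betw_imp_inj_on)
  have edge_iff: "{h a, h b} \<in> edges G \<longleftrightarrow> {a, b} \<in> edges H"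
    if "a \<in> verts H" "b \<in> verts H" for a b
  proof
    assume "{h a, h b} \<in> edges G"
    then obtain e where e: "e \<in> edges H" "{h a, h b} = h ` e" using edges_G by blast
    moreover obtain p q where "e = {p, q}" "p \<in> verts H" "q \<in> verts H"
      using simple e(1) unfolding simple_graph_def by blast
    then have "h ` e = h ` {a, b} \<Longrightarrow> e = {a, b}"
      using inj_on_image_eq_iff[OF inj, of e "{a, b}"] that by blast
    ultimately have "e = {a, b}" by (metis image_empty image_insert)
    then show "{a, b} \<in> edges H" using e(1) by simp
  next
    assume "{a, b} \<in> edges H"
    then have "h ` {a, b} \<in> (`) h ` edges H" by (rule imageI)
    then show "{h a, h b} \<in> edges G" using edges_G by simp
  qed
  fix u v
  assume "u \<in> verts G" "v \<in> verts G"
  then show "{u, v} \<in> edges G \<longleftrightarrow> {?f u, ?f v} \<in> edges H"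
    using edge_iff[of "?f u" "?f v"] bij_betw_apply[OF bij_betw_inv_into[OF bij]]
      bij_betw_inv_into_right[OF bij] by simp
qed

lemma edges_whiskered_star:
  "edges (whiskered_star n S) = (\<lambda>i. {0, i}) ` {1..n} \<union> (\<lambda>i. {i, n + 1 + i}) ` S"
proof -
  have "{1..n} = {i. 1 \<le> i \<and> i \<le> n}" by auto
  then show ?thesis unfolding whiskered_star_def edges_def by (simp add: setcompr_eq_image)
qed

lemma verts_whiskered_star:
  "verts (whiskered_star n S) = {0} \<union> {1..n} \<union> (\<lambda>i. n + 1 + i) ` S"
  unfolding whiskered_star_def verts_def by auto

lemma simple_graph_whiskered_star:
  assumes "S \<subseteq> {1..n}"
  shows "simple_graph (whiskered_star n S)"
  unfolding simple_graph_def edges_whiskered_star verts_whiskered_star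
proof
  fix e
  assume "e \<in> (\<lambda>i. {0, i}) ` {1..n} \<union> (\<lambda>i. {i, n + 1 + i}) ` S"
  then consider i where "i \<in> {1..n}" "e = {0, i}" | i where "i \<in> S" "e = {i, n + 1 + i}" by blast
  then show "\<exists>u v. u \<noteq> v \<and> u \<in> {0} \<union> {1..n} \<union> (\<lambda>i. n + 1 + i) ` S \<and>
      v \<in> {0} \<union> {1..n} \<union> (\<lambda>i. n + 1 + i) ` S \<and> e = {u, v}"
  proof cases
    case 1
    then show ?thesis by (intro exI[of _ 0] exI[of _ i]) auto
  next
    case 2
    then show ?thesis using assms by (intro exI[of _ i] exI[of _ "n + 1 + i"]) auto
  qed
qed

locale tree_matching_off =
  fixes G :: "'a sgraph" and c :: 'a
  assumes tree: "tree G" and centre: "c \<in> verts G" and matching: "matching_off G c"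
begin

definition whiskered :: "'a set" where
  "whiskered = {x \<in> nbrs G c. \<exists>z. {x, z} \<in> edges G \<and> z \<noteq> c}"

definition whisker :: "'a \<Rightarrow> 'a" where
  "whisker x = (SOME z. {x, z} \<in> edges G \<and> z \<noteq> c)"

lemma simple: "simple_graph G"
  using tree by (rule tree_simple)

lemma nbrs_centreD: "x \<in> nbrs G c \<Longrightarrow> {c, x} \<in> edges G \<and> x \<noteq> c \<and> x \<in> verts G"
  using simple_graph_edgeD[OF simple] unfolding nbrs_def by blast

lemma nbrs_centre_not_adjacent:
  assumes "x \<in> nbrs G c" "x' \<in> nbrs G c"
  shows "{x, x'} \<notin> edges G"
proof
  assume xx': "{x, x'} \<in> edges G"
  have cx: "{c, x} \<in> edges G" and cx': "{c, x'} \<in> edges G" using assms nbrs_centreD by blast+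
  have "distinct [c, x, x']"
    using assms nbrs_centreD simple_graph_edgeD(1)[OF simple xx'] by auto
  then show False using tree_no_triangle[OF tree _ cx xx' edge_commute[OF cx']] by blast
qed

lemma whisker_edge:
  assumes "x \<in> whiskered"
  shows "{x, whisker x} \<in> edges G" "whisker x \<noteq> c"
proof -
  have "\<exists>z. {x, z} \<in> edges G \<and> z \<noteq> c" using assms unfolding whiskered_def by blast
  then have "{x, whisker x} \<in> edges G \<and> whisker x \<noteq> c" unfolding whisker_def by (rule someI_ex)
  then show "{x, whisker x} \<in> edges G" "whisker x \<noteq> c" by blast+
qed

lemma whiskered_subset: "whiskered \<subseteq> nbrs G c"
  unfolding whiskered_def by blast

lemma whisker_unique:
  assumes "x \<in> nbrs G c" "{x, z} \<in> edges G" "z \<noteq> c"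
  shows "x \<in> whiskered" "z = whisker x"
proof -
  show x: "x \<in> whiskered" using assms unfolding whiskered_def by blast
  have "c \<notin> {x, z}" "c \<notin> {x, whisker x}"
    using assms(1,3) whisker_edge(2)[OF x] nbrs_centreD[of x] by auto
  then have "{x, z} = {x, whisker x}"
    using matching_off_edges_eq[OF matching assms(2) whisker_edge(1)[OF x]] by blast
  then show "z = whisker x" by (auto simp: doubleton_eq_iff)
qed

lemma whisker_not_nbr:
  assumes "x \<in> whiskered"
  shows "whisker x \<notin> nbrs G c"
  using nbrs_centre_not_adjacent[of x "whisker x"] whisker_edge(1)[OF assms] assms whiskered_subset
  by blast

lemma whisker_leaf:
  assumes "x \<in> whiskered" "{whisker x, q} \<in> edges G"
  shows "q = x"
proof (rule ccontr)
  assume "q \<noteq> x"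
  have "q \<noteq> c"
    using assms(2) whisker_not_nbr[OF assms(1)] unfolding nbrs_def by (auto simp: insert_commute)
  then have "c \<notin> {x, whisker x}" "c \<notin> {whisker x, q}"
    using assms(1) whisker_edge(2)[OF assms(1)] whiskered_subset nbrs_centreD[of x] by auto
  then have "{x, whisker x} = {whisker x, q}"
    using matching_off_edges_eq[OF matching whisker_edge(1)[OF assms(1)] assms(2)] by blast
  then show False
    using \<open>q \<noteq> x\<close> simple_graph_edgeD(1)[OF simple whisker_edge(1)[OF assms(1)]]
    by (auto simp: doubleton_eq_iff)
qed

lemma inj_on_whisker: "inj_on whisker whiskered"
proof (rule inj_onI)
  fix x x'
  assume "x \<in> whiskered" "x' \<in> whiskered" "whisker x = whisker x'"
  then have "{whisker x, x'} \<in> edges G" using whisker_edge(1)[of x'] by (simp add: insert_commute)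
  then show "x = x'" by (metis whisker_leaf[OF \<open>x \<in> whiskered\<close>])
qed

lemma verts_eq: "verts G = {c} \<union> nbrs G c \<union> whisker ` whiskered"
proof
  show "verts G \<subseteq> {c} \<union> nbrs G c \<union> whisker ` whiskered"
  proof (rule connected_graph_verts_subset)
    show "connected_graph G" using tree unfolding tree_def by blast
    show "c \<in> verts G" "c \<in> {c} \<union> nbrs G c \<union> whisker ` whiskered" using centre by simp_all
    fix x z
    assume x: "x \<in> {c} \<union> nbrs G c \<union> whisker ` whiskered" and xz: "{x, z} \<in> edges G"
    then consider "x = c" | "x \<in> nbrs G c" | x' where "x' \<in> whiskered" "x = whisker x'" by blast
    then show "z \<in> {c} \<union> nbrs G c \<union> whisker ` whiskered"
    proof cases
      case 1
      then show ?thesis using xz unfolding nbrs_def by simp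
    next
      case 2
      then show ?thesis using whisker_unique[OF 2 xz] by blast
    next
      case 3
      then show ?thesis using whisker_leaf[of x' z] xz whiskered_subset by blast
    qed
  qed
  show "{c} \<union> nbrs G c \<union> whisker ` whiskered \<subseteq> verts G"
    using centre nbrs_centreD simple_graph_edgeD(3)[OF simple whisker_edge(1)] by blast
qed

lemma edge_avoiding_centre:
  assumes "{p, q} \<in> edges G" "p \<noteq> c" "q \<noteq> c"
  shows "{p, q} \<in> (\<lambda>x. {x, whisker x}) ` whiskered"
proof -
  have "p \<in> nbrs G c \<union> whisker ` whiskered"
    using simple_graph_edgeD(2)[OF simple assms(1)] assms(2) verts_eq by blast
  then consider "p \<in> nbrs G c" | x where "x \<in> whiskered" "p = whisker x" by blast
  then show ?thesis
  proof cases
    case 1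
    then show ?thesis using whisker_unique[OF 1 assms(1,3)] by blast
  next
    case 2
    then have "q = x" using whisker_leaf assms(1) by blast
    then have "{p, q} = {x, whisker x}" using 2 by (simp add: insert_commute)
    then show ?thesis using 2 by blast
  qed
qed

lemma edges_eq: "edges G = (\<lambda>x. {c, x}) ` nbrs G c \<union> (\<lambda>x. {x, whisker x}) ` whiskered"
proof
  show "edges G \<subseteq> (\<lambda>x. {c, x}) ` nbrs G c \<union> (\<lambda>x. {x, whisker x}) ` whiskered"
  proof
    fix e
    assume "e \<in> edges G"
    then obtain p q where e: "e = {p, q}" using simple unfolding simple_graph_def by blast
    consider "p = c" | "q = c" | "p \<noteq> c" "q \<noteq> c" by blast
    then show "e \<in> (\<lambda>x. {c, x}) ` nbrs G c \<union> (\<lambda>x. {x, whisker x}) ` whiskered"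
    proof cases
      case 1
      then show ?thesis using \<open>e \<in> edges G\<close> e unfolding nbrs_def by blast
    next
      case 2
      then have "e = {c, p}" using e by (simp add: insert_commute)
      then show ?thesis using \<open>e \<in> edges G\<close> unfolding nbrs_def by blast
    next
      case 3
      then show ?thesis using edge_avoiding_centre \<open>e \<in> edges G\<close> e by blast
    qed
  qed
  show "(\<lambda>x. {c, x}) ` nbrs G c \<union> (\<lambda>x. {x, whisker x}) ` whiskered \<subseteq> edges G"
    using nbrs_centreD whisker_edge(1) by blast
qed

context
  fixes n :: nat and g :: "nat \<Rightarrow> 'a"
  assumes enum: "bij_betw g {1..n} (nbrs G c)"
begin

definition whisker_indices :: "nat set" where
  "whisker_indices = {i \<in> {1..n}. g i \<in> whiskered}"

definition star_map :: "nat \<Rightarrow> 'a" where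
  "star_map k = (if k = 0 then c else if k \<le> n then g k else whisker (g (k - (n + 1))))"

lemma whisker_indices_subset: "whisker_indices \<subseteq> {1..n}"
  unfolding whisker_indices_def by blast

lemma image_enum: "g ` {1..n} = nbrs G c"
  using enum by (rule bij_betw_imp_surj_on)

lemma image_whisker_indices: "g ` whisker_indices = whiskered"
proof
  show "g ` whisker_indices \<subseteq> whiskered" unfolding whisker_indices_def by blast
  show "whiskered \<subseteq> g ` whisker_indices"
  proof
    fix x
    assume "x \<in> whiskered"
    moreover obtain i where "i \<in> {1..n}" "x = g i"
      using \<open>x \<in> whiskered\<close> whiskered_subset image_enum by blast
    ultimately show "x \<in> g ` whisker_indices" unfolding whisker_indices_def by blast
  qed
qed

lemma star_map_0: "star_map 0 = c"
  by (simp add: star_map_def)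

lemma star_map_nbr: "i \<in> {1..n} \<Longrightarrow> star_map i = g i"
  by (simp add: star_map_def)

lemma star_map_whisker: "star_map (n + 1 + i) = whisker (g i)"
  by (simp add: star_map_def)

lemma bij_betw_star_map: "bij_betw star_map (verts (whiskered_star n whisker_indices)) (verts G)"
  unfolding verts_whiskered_star verts_eq
proof (intro bij_betw_combine)
  show "bij_betw star_map {0} {c}" by (rule bij_betw_imageI) (simp_all add: star_map_0)
  show "bij_betw star_map {1..n} (nbrs G c)"
    using bij_betw_cong[THEN iffD2, OF star_map_nbr enum] .
  show "bij_betw star_map ((\<lambda>i. n + 1 + i) ` whisker_indices) (whisker ` whiskered)"
  proof (rule bij_betw_imageI)
    show "inj_on star_map ((\<lambda>i. n + 1 + i) ` whisker_indices)"
    proof (rule inj_onI)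
      fix a b
      assume "a \<in> (\<lambda>i. n + 1 + i) ` whisker_indices" "b \<in> (\<lambda>i. n + 1 + i) ` whisker_indices"
        "star_map a = star_map b"
      then obtain i j where "i \<in> whisker_indices" "j \<in> whisker_indices" "a = n + 1 + i" "b = n + 1 + j"
        "whisker (g i) = whisker (g j)"
        using star_map_whisker by auto
      then show "a = b"
        using inj_onD[OF inj_on_whisker] inj_onD[OF bij_betw_imp_inj_on[OF enum]]
          whisker_indices_subset image_whisker_indices by blast
    qed
    show "star_map ` (\<lambda>i. n + 1 + i) ` whisker_indices = whisker ` whiskered"
      unfolding image_whisker_indices[symmetric] image_image star_map_whisker ..
  qed
  show "{c} \<inter> nbrs G c = {}" using nbrs_centreD by blast
  show "({c} \<union> nbrs G c) \<inter> whisker ` whiskered = {}"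
    using whisker_edge(2) whisker_not_nbr by (auto simp: eq_commute[of c])
qed

lemma edges_eq_image_star_map: "edges G = (`) star_map ` edges (whiskered_star n whisker_indices)"
proof -
  have "(`) star_map ` edges (whiskered_star n whisker_indices)
      = (\<lambda>i. star_map ` {0, i}) ` {1..n} \<union> (\<lambda>i. star_map ` {i, n + 1 + i}) ` whisker_indices"
    unfolding edges_whiskered_star image_Un image_image ..
  also have "\<dots> = (\<lambda>i. {c, g i}) ` {1..n} \<union> (\<lambda>i. {g i, whisker (g i)}) ` whisker_indices"
    using star_map_0 star_map_nbr star_map_whisker whisker_indices_subset
    by (intro arg_cong2[where f = "(\<union>)"] image_cong) auto
  also have "\<dots> = (\<lambda>x. {c, x}) ` nbrs G c \<union> (\<lambda>x. {x, whisker x}) ` whiskered"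
    unfolding image_enum[symmetric] image_whisker_indices[symmetric] image_image ..
  finally show ?thesis by (simp add: edges_eq)
qed

end

lemma isomorphic_whiskered_star: "\<exists>n S. S \<subseteq> {0..n} \<and> isomorphic G (whiskered_star n S)"
proof -
  obtain g where enum: "bij_betw g {1..card (nbrs G c)} (nbrs G c)"
    using ex_bij_betw_nat_finite_1[OF finite_nbrs[OF tree]] by blast
  let ?S = "whisker_indices (card (nbrs G c)) g"
  have "isomorphic G (whiskered_star (card (nbrs G c)) ?S)"
    using isomorphic_if_bij_betw_edges_image[OF simple_graph_whiskered_star[OF whisker_indices_subset[OF enum]]
        bij_betw_star_map[OF enum] edges_eq_image_star_map[OF enum]] .
  moreover have "?S \<subseteq> {0..card (nbrs G c)}" using whisker_indices_subset[OF enum] by auto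
  ultimately show ?thesis by blast
qed

end

section \<open>The four families\<close>

lemma ex_matching_off_if_isomorphic:
  assumes simple: "simple_graph G" and iso: "isomorphic G H"
    and "\<exists>c'\<in>verts H. matching_off H c'"
  shows "\<exists>c. matching_off G c"
proof -
  obtain c' where centre: "c' \<in> verts H" and matching: "matching_off H c'" using assms(3) by blast
  obtain f where bij: "bij_betw f (verts G) (verts H)"
    and edges_iff: "\<forall>u\<in>verts G. \<forall>v\<in>verts G. {u, v} \<in> edges G \<longleftrightarrow> {f u, f v} \<in> edges H"
    using iso unfolding isomorphic_def by blast
  have inj: "inj_on f (verts G)" using bij by (rule bij_betw_imp_inj_on)
  define c where "c = inv_into (verts G) f c'"
  have c: "c \<in> verts G" "f c = c'"
    using bij_betw_apply[OF bij_betw_inv_into[OF bij] centre] bij_betw_inv_into_right[OF bij centre]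
    unfolding c_def by simp_all
  have image_edge: "f ` e \<in> edges H" "e \<subseteq> verts G" if "e \<in> edges G" for e
  proof -
    have "\<exists>u v. e = {u, v} \<and> u \<in> verts G \<and> v \<in> verts G"
      using simple that unfolding simple_graph_def by blast
    then obtain u v where "e = {u, v}" "u \<in> verts G" "v \<in> verts G" by blast
    then show "f ` e \<in> edges H" "e \<subseteq> verts G" using edges_iff that by simp_all
  qed
  have "matching_off G c"
    unfolding matching_off_def
  proof (intro ballI impI)
    fix e e'
    assume e: "e \<in> edges G" and e': "e' \<in> edges G" and "e \<noteq> e'" "c \<notin> e" "c \<notin> e'"
    then have "f ` e \<noteq> f ` e'" "c' \<notin> f ` e" "c' \<notin> f ` e'"
      using inj_on_image_eq_iff[OF inj image_edge(2)[OF e] image_edge(2)[OF e']]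
        inj_on_image_mem_iff[OF inj c(1)] image_edge(2) c(2) by auto
    then have "f ` e \<inter> f ` e' = {}"
      using matching image_edge(1)[OF e] image_edge(1)[OF e'] unfolding matching_off_def by blast
    then show "e \<inter> e' = {}" by blast
  qed
  then show ?thesis by blast
qed

lemma ex_matching_off_star_graph: "\<exists>c\<in>verts (star_graph n). matching_off (star_graph n) c"
proof
  show "matching_off (star_graph n) 0" unfolding matching_off_def star_graph_def edges_def by auto
qed (simp add: star_graph_def verts_def)

lemma ex_matching_off_whiskered_star:
  assumes "S \<subseteq> {0..n}"
  shows "\<exists>c\<in>verts (whiskered_star n S). matching_off (whiskered_star n S) c"
proof
  show "matching_off (whiskered_star n S) 0"
    using assms unfolding matching_off_def whiskered_star_def edges_def by auto
qed (simp add: whiskered_star_def verts_def)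

lemma ex_matching_off_path_graph:
  assumes "2 \<le> n" "n \<le> 5"
  shows "\<exists>c\<in>verts (path_graph n). matching_off (path_graph n) c"
proof
  show "matching_off (path_graph n) (if n = 5 then 3 else 2)"
    using assms(2) unfolding matching_off_def path_graph_def edges_def by (auto simp: doubleton_eq_iff)
  show "(if n = 5 then 3 else 2) \<in> verts (path_graph n)"
    using assms unfolding path_graph_def verts_def by simp
qed

lemma broom_edge_lipschitz:
  assumes "{x, y} \<in> edges (broom n m)"
  shows "\<bar>(if x \<le> n then int x else 0) - (if y \<le> n then int y else 0)\<bar> \<le> 1"
  using assms unfolding broom_def edges_def by (auto simp: doubleton_eq_iff)

lemma broom_short_if_diameter_le_3:
  assumes "diameter (broom n m) \<le> 3"
  shows "n \<le> 3 \<or> (n = 4 \<and> m = 0)"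
proof (rule ccontr)
  assume long: "\<not> (n \<le> 3 \<or> (n = 4 \<and> m = 0))"
  let ?B = "broom n m"
  let ?p = "\<lambda>x. if x \<le> n then int x else 0"
  have verts_B: "verts ?B = {1..n + m}" unfolding broom_def verts_def by simp
  have path_edge: "{i, i + 1} \<in> edges ?B" if "1 \<le> i" "i + 1 \<le> n" for i
    using that unfolding broom_def edges_def by auto
  have leaf_edge: "{j, 1} \<in> edges ?B" if "n < j" "j \<le> n + m" for j
    using that unfolding broom_def edges_def by (auto simp: insert_commute)
  \<comment> \<open>two vertices whose potentials differ by 4 but whose distance is at most the diameter\<close>
  obtain xs where xs: "walk ?B xs" "hd xs \<in> verts ?B" "last xs \<in> verts ?B"
    "4 \<le> \<bar>?p (hd xs) - ?p (last xs)\<bar>"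
  proof (cases "5 \<le> n")
    case True
    then have "walk ?B [1, 2, 3, 4, 5]"
      using path_edge[of 1] path_edge[of 2] path_edge[of 3] path_edge[of 4]
      by (simp add: verts_B eval_nat_numeral)
    then show thesis using True by (intro that[of "[1, 2, 3, 4, 5]"]) (simp_all add: verts_B)
  next
    case False
    then have "4 \<le> n" "n < 5" "5 \<le> n + m" using long by auto
    then have "walk ?B [5, 1, 2, 3, 4]"
      using leaf_edge[of 5] path_edge[of 1] path_edge[of 2] path_edge[of 3]
      by (simp add: verts_B eval_nat_numeral)
    then show thesis
      using \<open>4 \<le> n\<close> \<open>n < 5\<close> \<open>5 \<le> n + m\<close> by (intro that[of "[5, 1, 2, 3, 4]"]) (simp_all add: verts_B)
  qed
  have "\<bar>?p (hd xs) - ?p (last xs)\<bar> \<le> int (dist ?B (hd xs) (last xs))"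
    using dist_ge_lipschitz[of ?B ?p, OF broom_edge_lipschitz xs(1) refl refl] .
  moreover have "dist ?B (hd xs) (last xs) \<le> 3"
    using dist_le_diameter[of ?B, OF _ xs(2,3)] assms by (simp add: verts_B)
  ultimately show False using xs(4) by linarith
qed

lemma ex_matching_off_broom:
  assumes "1 \<le> n" "diameter (broom n m) \<le> 3"
  shows "\<exists>c\<in>verts (broom n m). matching_off (broom n m) c"
proof (cases "n \<le> 3")
  case True
  show ?thesis
  proof
    show "matching_off (broom n m) 1"
      using True unfolding matching_off_def broom_def edges_def by (auto simp: doubleton_eq_iff)
    show "1 \<in> verts (broom n m)" using assms(1) unfolding broom_def verts_def by simp
  qed
next
  case False
  then have "n = 4" "m = 0" using broom_short_if_diameter_le_3[OF assms(2)] by simp_all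
  show ?thesis
  proof
    show "matching_off (broom n m) 2"
      using \<open>n = 4\<close> \<open>m = 0\<close> unfolding matching_off_def broom_def edges_def
      by (auto simp: doubleton_eq_iff)
    show "2 \<in> verts (broom n m)" using \<open>n = 4\<close> unfolding broom_def verts_def by simp
  qed
qed

theorem corollary2p11:
  fixes T :: "'a sgraph"
  assumes "tree T"
  shows "co_chordal (line_graph T) \<longleftrightarrow>
    ((\<exists>n. isomorphic T (star_graph n)) \<or>
     (\<exists>n m. 1 \<le> n \<and> diameter (broom n m) = 3 \<and> isomorphic T (broom n m)) \<or>
     (\<exists>n S. S \<subseteq> {0..n} \<and> isomorphic T (whiskered_star n S)) \<or>
     (\<exists>n. 2 \<le> n \<and> n \<le> 5 \<and> isomorphic T (path_graph n)))"
    (is "_ \<longleftrightarrow> ?star \<or> ?broom \<or> ?whiskered \<or> ?path")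
proof
  assume "co_chordal (line_graph T)"
  then have "\<not> has_two_disjoint_P3 T" by (rule no_two_disjoint_P3_if_co_chordal_line_graph)
  then obtain c where "c \<in> verts T" "matching_off T c" using ex_matching_off_if_no_two_disjoint_P3[OF assms] by blast
  then interpret tree_matching_off T c using assms by unfold_locales
  show "?star \<or> ?broom \<or> ?whiskered \<or> ?path" using isomorphic_whiskered_star by blast
next
  assume "?star \<or> ?broom \<or> ?whiskered \<or> ?path"
  then obtain H :: "nat sgraph" where "isomorphic T H" "\<exists>c\<in>verts H. matching_off H c"
    using ex_matching_off_star_graph ex_matching_off_broom[OF _ eq_imp_le]
      ex_matching_off_whiskered_star ex_matching_off_path_graph by blast
  then obtain c where "matching_off T c"
    using ex_matching_off_if_isomorphic[OF tree_simple[OF assms]] by blast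
  then show "co_chordal (line_graph T)" by (rule co_chordal_line_graph_if_matching_off)
qed

end
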